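(* Let $\xi_1,\xi_2,\ldots$ be i.i.d. random vectors in $\mathbb{R}^d$ with Lebesgue density $g$, and for the sample $\xi_1,\dots,\xi_n$ let $R_n(i)=\min_{j\ne i}|\xi_i-\xi_j|$, $B_n(\xi_i)=\{y:|y-\xi_i|\le R_n(i)\}$ and $z_{i,n}(\theta_0)=n\int_{B_n(\xi_i)}g(y)\,dy$. Fix $i$ and let $X_n$ be random vectors with $X_n\xrightarrow{p}X$, where the components of $X$ are continuous functions of $\xi_i$ only. Then \[ \begin{pmatrix} z_{i,n}(\theta_0)\\ X_n\end{pmatrix}\xrightarrow{D}\begin{pmatrix} Z\\ X\end{pmatrix}, \] where $Z\sim \mathrm{Exp}(1)$ is independent of $X$.
   Context: $g=f_{\theta_0}$ is the true density of a parametric model, so $z_{i,n}(\theta_0)=nP_{\theta_0}(B_n(\xi_i))$ is $n$ times the true probability of the nearest neighbour ball of $\xi_i$. *)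

theory Defs
  imports "HOL-Probability.Probability"
begin

definition nn_radius :: "(nat \<Rightarrow> 'w \<Rightarrow> 'd::metric_space) \<Rightarrow> nat \<Rightarrow> nat \<Rightarrow> 'w \<Rightarrow> real" where
  "nn_radius \<xi> n i \<omega> = Min ((\<lambda>j. dist (\<xi> i \<omega>) (\<xi> j \<omega>)) ` ({1..n} - {i}))"

definition z_stat :: "('d::euclidean_space \<Rightarrow> real) \<Rightarrow> (nat \<Rightarrow> 'w \<Rightarrow> 'd) \<Rightarrow> nat \<Rightarrow> nat \<Rightarrow> 'w \<Rightarrow> real" where
  "z_stat g \<xi> i n \<omega> = real n * (LINT y : cball (\<xi> i \<omega>) (nn_radius \<xi> n i \<omega>) | lborel. g y)"

definition conv_in_prob :: "'w measure \<Rightarrow> (nat \<Rightarrow> 'w \<Rightarrow> 'b::metric_space) \<Rightarrow> ('w \<Rightarrow> 'b) \<Rightarrow> bool" where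
  "conv_in_prob M Y Z \<longleftrightarrow>
     (\<forall>e>0. (\<lambda>n. measure M {\<omega> \<in> space M. dist (Y n \<omega>) (Z \<omega>) > e}) \<longlonglongrightarrow> 0)"

definition conv_in_dist :: "'w measure \<Rightarrow> (nat \<Rightarrow> 'w \<Rightarrow> 'b::topological_space) \<Rightarrow> 'b measure \<Rightarrow> bool" where
  "conv_in_dist M Y L \<longleftrightarrow>
     (\<forall>f :: 'b \<Rightarrow> real. continuous_on UNIV f \<longrightarrow> bounded (range f) \<longrightarrow>
        (\<lambda>n. \<integral>\<omega>. f (Y n \<omega>) \<partial>M) \<longlonglongrightarrow> (\<integral>x. f x \<partial>L))"

end

(*
  Fix x = xi_i. The other n - 1 points are i.i.d. with law mu = g dx and independent of xi_i.
  Spheres are Lebesgue null, so r |-> mu(cball x r) is continuous and the variables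
  U_j = mu(cball x |x - xi_j|) are uniform on [0, 1] (probability integral transform).
  Hence z_{i,n} = n min_j U_j satisfies P(z_{i,n} > t | xi_i = x) = (1 - t/n)^(n-1) -> exp(-t).
  Integrating over x by dominated convergence gives (z_{i,n}, xi_i) -> Exp(1) (x) mu in
  distribution, and mapping xi_i to h(xi_i) gives the limit Exp(1) (x) law(h(xi_i)).
  Finally X_n may replace h(xi_i) (Slutsky): the pairs (z_{i,n}, h(xi_i)) are bounded in
  probability and X_n - h(xi_i) -> 0 in probability.
*)

theory Submission
  imports Defs
begin

lemma sets_pair_borel:
  fixes A :: "'a::second_countable_topology measure" and B :: "'b::second_countable_topology measure"
  assumes "sets A = sets borel" "sets B = sets borel"
  shows "sets (A \<Otimes>\<^sub>M B) = sets (borel :: ('a \<times> 'b) measure)"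
proof -
  have "sets (A \<Otimes>\<^sub>M B) = sets (borel \<Otimes>\<^sub>M borel)" by (intro sets_pair_measure_cong assms)
  then show ?thesis by (simp only: borel_prod)
qed

lemma borel_measurable_integral_PiM:
  fixes \<mu> :: "'d::topological_space measure" and F :: "'d \<Rightarrow> ('i \<Rightarrow> 'd) \<Rightarrow> real"
  assumes "prob_space \<mu>" and sets: "sets \<mu> = sets borel"
    and F: "case_prod F \<in> borel_measurable (borel \<Otimes>\<^sub>M PiM J (\<lambda>_. borel))"
  shows "(\<lambda>x. \<integral>y. F x y \<partial>PiM J (\<lambda>_. \<mu>)) \<in> borel_measurable \<mu>"
proof -
  interpret PiJ: prob_space "PiM J (\<lambda>_. \<mu>)" by (simp add: prob_space_PiM assms(1))
  have "sets (\<mu> \<Otimes>\<^sub>M PiM J (\<lambda>_. \<mu>)) = sets (borel \<Otimes>\<^sub>M PiM J (\<lambda>_. borel))"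
    by (intro sets_pair_measure_cong sets sets_PiM_cong refl)
  then have "case_prod F \<in> borel_measurable (\<mu> \<Otimes>\<^sub>M PiM J (\<lambda>_. \<mu>))"
    using F by (simp cong: measurable_cong_sets)
  then show ?thesis by (rule PiJ.borel_measurable_lebesgue_integral)
qed

lemma (in prob_space) abs_integral_le_const:
  fixes f :: "'a \<Rightarrow> real"
  assumes "\<And>x. \<bar>f x\<bar> \<le> K"
  shows "\<bar>integral\<^sup>L M f\<bar> \<le> K"
proof (cases "integrable M f")
  case True
  have "\<bar>integral\<^sup>L M f\<bar> \<le> (\<integral>x. \<bar>f x\<bar> \<partial>M)" by (rule integral_abs_bound)
  also have "\<dots> \<le> K" using True assms by (intro integral_le_const) auto
  finally show ?thesis .
next
  case False
  then show ?thesis using assms[of undefined] by (simp add: not_integrable_integral_eq)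
qed

lemma (in prob_space) measure_le_integral:
  assumes "A \<in> sets M" and f: "f \<in> borel_measurable M" "\<And>\<omega>. \<bar>f \<omega>\<bar> \<le> 1"
    and le: "\<And>\<omega>. \<omega> \<in> A \<Longrightarrow> 1 \<le> f \<omega>" "\<And>\<omega>. 0 \<le> f \<omega>"
  shows "measure M A \<le> (\<integral>\<omega>. f \<omega> \<partial>M)"
proof -
  have "measure M A = (\<integral>\<omega>. indicator A \<omega> \<partial>M)" using assms(1) by simp
  also have "\<dots> \<le> (\<integral>\<omega>. f \<omega> \<partial>M)"
    using assms(1) f le
    by (intro integral_mono integrable_const_bound[where B=1])
      (auto simp: indicator_def emeasure_eq_measure)
  finally show ?thesis .
qed

lemma (in prob_space) integral_le_measure:
  assumes "A \<in> sets M" and f: "f \<in> borel_measurable M"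
    and le: "\<And>\<omega>. \<omega> \<notin> A \<Longrightarrow> f \<omega> \<le> 0" "\<And>\<omega>. f \<omega> \<le> 1"  "\<And>\<omega>. 0 \<le> f \<omega>"
  shows "(\<integral>\<omega>. f \<omega> \<partial>M) \<le> measure M A"
proof -
  have "(\<integral>\<omega>. f \<omega> \<partial>M) \<le> (\<integral>\<omega>. indicator A \<omega> \<partial>M)"
    using assms(1) f le
    by (intro integral_mono integrable_const_bound[where B=1])
      (auto simp: indicator_def emeasure_eq_measure intro: order_trans[OF _ le(2)])
  also have "\<dots> = measure M A" using assms(1) by simp
  finally show ?thesis .
qed

lemma (in prob_space) abs_integral_diff_le:
  assumes f: "f \<in> borel_measurable M" "\<And>\<omega>. \<bar>f \<omega>\<bar> \<le> K" and g: "g \<in> borel_measurable M" "\<And>\<omega>. \<bar>g \<omega>\<bar> \<le> K"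
    and G: "G \<in> sets M" "\<And>\<omega>. \<omega> \<in> G \<Longrightarrow> \<bar>f \<omega> - g \<omega>\<bar> \<le> e" and "0 \<le> e"
  shows "\<bar>(\<integral>\<omega>. f \<omega> \<partial>M) - (\<integral>\<omega>. g \<omega> \<partial>M)\<bar> \<le> e + 2 * K * measure M (space M - G)"
proof -
  have "K \<ge> 0" using f(2)[of undefined] by simp
  have int: "integrable M f" "integrable M g"
    using f g by (auto intro: integrable_const_bound[where B=K])
  have int_bound: "integrable M (\<lambda>\<omega>. e + 2 * K * indicator (space M - G) \<omega>)"
    using G(1) by (auto intro!: integrable_mult_right integrable_real_indicator simp: emeasure_eq_measure)
  have "\<bar>f \<omega> - g \<omega>\<bar> \<le> e + 2 * K * indicator (space M - G) \<omega>" if "\<omega> \<in> space M" for \<omega>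
    using G(2)[of \<omega>] f(2)[of \<omega>] g(2)[of \<omega>] that \<open>0 \<le> e\<close> \<open>K \<ge> 0\<close>
    by (cases "\<omega> \<in> G") (auto simp: indicator_def)
  then have "(\<integral>\<omega>. \<bar>f \<omega> - g \<omega>\<bar> \<partial>M) \<le> (\<integral>\<omega>. e + 2 * K * indicator (space M - G) \<omega> \<partial>M)"
    using int int_bound by (intro integral_mono) auto
  also have "\<dots> = e + 2 * K * measure M (space M - G)"
    using G(1) integrable_real_indicator[of "space M - G" M]
    by (simp add: Bochner_Integration.integral_add emeasure_eq_measure prob_space)
  finally show ?thesis
    using int integral_abs_bound[of M "\<lambda>\<omega>. f \<omega> - g \<omega>"] by simp
qed

lemma (in prob_space) integral_indep_var:
  fixes G :: "'s \<times> 's \<Rightarrow> real"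
  assumes indep: "indep_var S X T Y"
    and G: "G \<in> borel_measurable (S \<Otimes>\<^sub>M T)" "\<And>p. \<bar>G p\<bar> \<le> K"
  shows "(\<integral>\<omega>. G (X \<omega>, Y \<omega>) \<partial>M) = (\<integral>x. (\<integral>y. G (x, y) \<partial>distr M T Y) \<partial>distr M S X)"
proof -
  have X: "random_variable S X" and Y: "random_variable T Y"
    using indep by (auto dest: indep_var_rv1 indep_var_rv2)
  interpret PX: prob_space "distr M S X" using X by (rule prob_space_distr)
  interpret PY: prob_space "distr M T Y" using Y by (rule prob_space_distr)
  interpret PXY: pair_prob_space "distr M S X" "distr M T Y" ..
  have joint: "distr M (S \<Otimes>\<^sub>M T) (\<lambda>\<omega>. (X \<omega>, Y \<omega>)) = distr M S X \<Otimes>\<^sub>M distr M T Y"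
    using indep by (simp add: indep_var_distribution_eq)
  have "integrable (distr M S X \<Otimes>\<^sub>M distr M T Y) G"
    using G by (intro PXY.P.integrable_const_bound[where B=K]) (simp_all cong: measurable_cong_sets)
  then have "(\<integral>x. (\<integral>y. G (x, y) \<partial>distr M T Y) \<partial>distr M S X) = integral\<^sup>L (distr M S X \<Otimes>\<^sub>M distr M T Y) G"
    by (rule PXY.integral_fst')
  also have "\<dots> = (\<integral>\<omega>. G (X \<omega>, Y \<omega>) \<partial>M)"
    using X Y G(1) by (simp add: joint[symmetric] integral_distr)
  finally show ?thesis by simp
qed

section \<open>The probability integral transform for ball masses\<close>

lemma (in real_distribution) greater_cdf_eq_greaterThan:
  assumes cont: "\<And>r. isCont (cdf M) r" and "cdf M a \<le> s" "s < 1"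
  obtains r0 where "cdf M r0 = s" "{r. s < cdf M r} = {r0<..}"
proof -
  define A where "A = {r. cdf M r \<le> s}"
  from cdf_lim_at_top_prob \<open>s < 1\<close> have "eventually (\<lambda>r. s < cdf M r) at_top"
    by (simp add: order_tendstoD(1))
  then obtain R where R: "\<And>r. r \<ge> R \<Longrightarrow> s < cdf M r" by (auto simp: eventually_at_top_linorder)
  have bdd: "bdd_above A" unfolding A_def bdd_above_def
    by (metis R linorder_not_le mem_Collect_eq order_less_le)
  have "closed A"
    unfolding A_def using cont by (intro closed_Collect_le continuous_on_const continuous_at_imp_continuous_on) auto
  define r0 where "r0 = Sup A"
  have "r0 \<in> A" unfolding r0_def using \<open>cdf M a \<le> s\<close> by (intro closed_contains_Sup bdd \<open>closed A\<close>) (auto simp: A_def)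
  have greater: "s < cdf M r" if "r > r0" for r
    using that cSup_upper[OF _ bdd, of r] unfolding r0_def A_def by force
  have "cdf M r0 = s"
  proof (rule ccontr)
    assume "cdf M r0 \<noteq> s"
    with \<open>r0 \<in> A\<close> have "cdf M r0 < s" unfolding A_def by simp
    moreover have "(cdf M \<longlongrightarrow> cdf M r0) (at_right r0)"
      using cont[of r0] by (simp add: isCont_def filterlim_at_split)
    ultimately have "eventually (\<lambda>r. cdf M r < s) (at_right r0)" by (simp add: order_tendstoD(2))
    then obtain b where b: "b > r0" "\<And>r. r0 < r \<Longrightarrow> r < b \<Longrightarrow> cdf M r < s"
      by (auto simp: eventually_at_right_field)
    then have "cdf M ((r0 + b) / 2) < s" by simp
    then show False using greater[of "(r0 + b) / 2"] b(1) by simp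
  qed
  moreover have "{r. s < cdf M r} = {r0<..}"
    using greater cdf_nondecreasing[of _ r0] \<open>cdf M r0 = s\<close> by (force simp: not_le)
  ultimately show thesis by (rule that)
qed

lemma (in real_distribution) measure_cdf_greater:
  assumes cont: "\<And>r. isCont (cdf M) r" and s: "0 \<le> s" "s \<le> 1"
  shows "measure M {r. s < cdf M r} = 1 - s"
proof (cases "s = 1")
  case True
  then have "{r. s < cdf M r} = {}" using cdf_bounded_prob by (auto simp: not_less)
  then show ?thesis using True by simp
next
  case False
  with s have "s < 1" by simp
  show ?thesis
  proof (cases "\<exists>a. cdf M a \<le> s")
    case True
    then obtain a where "cdf M a \<le> s" ..
    then obtain r0 where "cdf M r0 = s" "{r. s < cdf M r} = {r0<..}"
      using greater_cdf_eq_greaterThan[OF cont _ \<open>s < 1\<close>] by blast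
    moreover have "{r0<..} = space M - {..r0}" by auto
    ultimately show ?thesis using prob_compl[of "{..r0}"] by (simp add: cdf_def)
  next
    case False
    then have "{r. s < cdf M r} = space M" by (auto simp: not_le)
    moreover have "s = 0"
    proof (rule ccontr)
      assume "s \<noteq> 0"
      with s have "eventually (\<lambda>r. cdf M r < s) at_bot"
        using cdf_lim_at_bot by (simp add: order_tendstoD(2))
      then obtain r where "cdf M r < s" using eventually_happens' by fastforce
      then have "cdf M r \<le> s" by simp
      with False show False by blast
    qed
    ultimately show ?thesis using prob_space by simp
  qed
qed

lemma measure_cball_dist_greater:
  fixes \<mu> :: "'d::euclidean_space measure" and x :: 'd
  assumes "prob_space \<mu>" and sets: "sets \<mu> = sets borel"
    and null: "\<And>r. measure \<mu> (sphere x r) = 0"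
    and s: "0 \<le> s" "s \<le> 1"
  shows "measure \<mu> {y. s < measure \<mu> (cball x (dist x y))} = 1 - s"
proof -
  interpret prob_space \<mu> by fact
  have space: "space \<mu> = UNIV" using sets_eq_imp_space_eq[OF sets] by simp
  have dist_meas: "dist x \<in> borel_measurable \<mu>" using sets by (simp cong: measurable_cong_sets)
  interpret \<nu>: real_distribution "distr \<mu> borel (dist x)" using dist_meas by simp
  have measure_\<nu>: "measure (distr \<mu> borel (dist x)) A = measure \<mu> (dist x -` A)" if "A \<in> sets borel" for A
    using that by (simp add: measure_distr[OF dist_meas] space)
  have cdf_\<nu>: "cdf (distr \<mu> borel (dist x)) r = measure \<mu> (cball x r)" for r
    by (simp add: cdf_def measure_\<nu> vimage_def cball_def)
  have "isCont (cdf (distr \<mu> borel (dist x))) r" for r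
    using null[of r] by (simp add: \<nu>.isCont_cdf measure_\<nu> vimage_def sphere_def)
  moreover have "{r. s < cdf (distr \<mu> borel (dist x)) r} \<in> sets borel"
    using calculation by (intro borel_open open_Collect_less continuous_on_const)
      (simp add: continuous_at_imp_continuous_on)
  ultimately show ?thesis
    using \<nu>.measure_cdf_greater[OF _ s] by (simp add: measure_\<nu> cdf_\<nu> vimage_def)
qed

section \<open>The mass of the nearest-neighbour ball\<close>

definition nn_ball_mass :: "'d::metric_space measure \<Rightarrow> 'i set \<Rightarrow> 'd \<Rightarrow> ('i \<Rightarrow> 'd) \<Rightarrow> real" where
  "nn_ball_mass \<mu> J x y = measure \<mu> (cball x (Min ((\<lambda>j. dist x (y j)) ` J)))"

lemma borel_measurable_measure_cball:
  fixes \<mu> :: "'d::euclidean_space measure"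
  assumes "finite_measure \<mu>" and sets: "sets \<mu> = sets borel"
  shows "(\<lambda>p. measure \<mu> (cball (fst p) (snd p))) \<in> borel_measurable (borel :: ('d \<times> real) measure)"
proof -
  interpret finite_measure \<mu> by fact
  define Q where "Q = {q. dist (fst (fst q)) (snd q) \<le> snd (fst (q :: ('d \<times> real) \<times> 'd))}"
  have "closed Q" unfolding Q_def by (intro closed_Collect_le continuous_intros)
  then have "Q \<in> sets (borel \<Otimes>\<^sub>M borel)" by (subst borel_prod) (rule borel_closed)
  then have "Q \<in> sets ((borel :: ('d \<times> real) measure) \<Otimes>\<^sub>M \<mu>)"
    by (simp add: sets_pair_measure_cong[OF refl sets])
  then have "(\<lambda>p. emeasure \<mu> (Pair p -` Q)) \<in> borel_measurable borel"
    by (rule measurable_emeasure_Pair)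
  moreover have "Pair p -` Q = cball (fst p) (snd p)" for p unfolding Q_def by (auto simp: cball_def)
  ultimately show ?thesis by (simp add: measure_def)
qed

lemma borel_measurable_nn_ball_mass:
  fixes \<mu> :: "'d::euclidean_space measure"
  assumes "finite_measure \<mu>" "sets \<mu> = sets borel" "finite J"
  shows "(\<lambda>p. nn_ball_mass \<mu> J (fst p) (snd p)) \<in> borel_measurable (borel \<Otimes>\<^sub>M PiM J (\<lambda>_. borel))"
proof -
  have "(\<lambda>p. dist (fst p) (snd p j)) \<in> borel_measurable (borel \<Otimes>\<^sub>M PiM J (\<lambda>_. (borel :: 'd measure)))"
    if "j \<in> J" for j
    using that by measurable
  then have "(\<lambda>p. (fst p, Min ((\<lambda>j. dist (fst p) (snd p j)) ` J)))
      \<in> measurable (borel \<Otimes>\<^sub>M PiM J (\<lambda>_. borel)) (borel :: ('d \<times> real) measure)"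
    unfolding borel_prod[symmetric] by (intro measurable_Pair measurable_fst borel_measurable_Min assms)
  from measurable_compose[OF this borel_measurable_measure_cball[OF assms(1,2)]] show ?thesis
    by (simp add: nn_ball_mass_def)
qed

lemma borel_measurable_nn_ball_mass_PiM:
  fixes \<mu> :: "'d::euclidean_space measure"
  assumes "finite_measure \<mu>" and sets: "sets \<mu> = sets borel" and "finite J"
  shows "nn_ball_mass \<mu> J x \<in> borel_measurable (PiM J (\<lambda>_. \<mu>))"
proof -
  have "(\<lambda>y. (x, y)) \<in> measurable (PiM J (\<lambda>_. \<mu>)) (borel \<Otimes>\<^sub>M PiM J (\<lambda>_. borel))"
    using sets by (simp cong: measurable_cong_sets sets_PiM_cong)
  from measurable_compose[OF this borel_measurable_nn_ball_mass[OF assms]] show ?thesis by simp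
qed

lemma nn_ball_mass_restrict [simp]: "nn_ball_mass \<mu> J x (restrict y J) = nn_ball_mass \<mu> J x y"
  by (simp add: nn_ball_mass_def)

lemma prob_nn_ball_mass_greater:
  fixes \<mu> :: "'d::euclidean_space measure"
  assumes "prob_space \<mu>" and sets: "sets \<mu> = sets borel" and null: "\<And>r. measure \<mu> (sphere x r) = 0"
    and J: "finite J" "J \<noteq> {}" and s: "0 \<le> s" "s \<le> 1"
  shows "measure (PiM J (\<lambda>_. \<mu>)) {y \<in> space (PiM J (\<lambda>_. \<mu>)). s < nn_ball_mass \<mu> J x y} = (1 - s) ^ card J"
proof -
  interpret prob_space \<mu> by fact
  interpret product: finite_product_prob_space "\<lambda>_. \<mu>" J
    by unfold_locales fact
  have space: "space \<mu> = UNIV" using sets_eq_imp_space_eq[OF sets] by simp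
  define C where "C r = measure \<mu> (cball x r)" for r
  have "mono C" unfolding C_def mono_def by (intro allI impI finite_measure_mono) (auto simp: sets)
  define B where "B = {z. s < C (dist x z)}"
  have "(\<lambda>z. (x, dist x z)) \<in> borel_measurable \<mu>"
    using sets by (simp cong: measurable_cong_sets)
  from measurable_compose[OF this borel_measurable_measure_cball] sets
  have "(\<lambda>z. C (dist x z)) \<in> borel_measurable \<mu>"
    by (simp add: C_def finite_measure_axioms)
  then have "(\<lambda>z. C (dist x z)) -` {s<..} \<inter> space \<mu> \<in> sets \<mu>" by (rule measurable_sets) simp
  then have "B \<in> sets \<mu>" by (simp add: B_def space vimage_def)
  have "nn_ball_mass \<mu> J x y = Min (C ` (\<lambda>j. dist x (y j)) ` J)" for y
    unfolding nn_ball_mass_def C_def[symmetric] using J by (intro mono_Min_commute[OF \<open>mono C\<close>]) auto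
  then have "s < nn_ball_mass \<mu> J x y \<longleftrightarrow> (\<forall>j\<in>J. y j \<in> B)" for y
    using J by (simp add: Min_gr_iff B_def)
  then have "{y \<in> space (PiM J (\<lambda>_. \<mu>)). s < nn_ball_mass \<mu> J x y} = PiE J (\<lambda>_. B)"
    by (auto simp: space_PiM space PiE_iff extensional_def)
  also have "measure (PiM J (\<lambda>_. \<mu>)) \<dots> = measure \<mu> B ^ card J"
    using product.prob_times[of "\<lambda>_. B"] \<open>B \<in> sets \<mu>\<close> by simp
  also have "measure \<mu> B = 1 - s"
    unfolding B_def C_def by (rule measure_cball_dist_greater) fact+
  finally show ?thesis .
qed

section \<open>The exponential limit\<close>

definition std_exponential :: "real measure" where
  "std_exponential = density lborel (\<lambda>x. ennreal (exponential_density 1 x))"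

lemma real_distribution_std_exponential: "real_distribution std_exponential"
  unfolding std_exponential_def
  by (intro real_distribution.intro prob_space_exponential_density real_distribution_axioms.intro) simp_all

lemma sets_std_exponential [measurable_cong]: "sets std_exponential = sets borel"
  by (simp add: std_exponential_def)

lemma cdf_std_exponential: "cdf std_exponential t = (if t < 0 then 0 else 1 - exp (- t))"
proof -
  interpret real_distribution std_exponential by (rule real_distribution_std_exponential)
  have distributed: "distributed std_exponential lborel (\<lambda>x. x) (exponential_density 1)"
    by (simp add: distributed_def std_exponential_def distr_id2)
  have nonneg: "cdf std_exponential a = 1 - exp (- a)" if "0 \<le> a" for a
    using exponential_distributedD_le[OF distributed that] by (simp add: cdf_def atMost_def)
  show ?thesis
  proof (cases "t < 0")
    case True
    then have "cdf std_exponential t \<le> cdf std_exponential 0" by (intro cdf_nondecreasing) simp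
    then show ?thesis using True nonneg[of 0] cdf_nonneg[of t] by simp
  qed (use nonneg in auto)
qed

lemma tendsto_one_minus_div_power_pred: "(\<lambda>n. (1 - t / real n) ^ (n - 1)) \<longlonglongrightarrow> exp (- t)"
proof -
  have "(\<lambda>n. (1 + (- t) / real n) ^ n / (1 - t / real n)) \<longlonglongrightarrow> exp (- t) / (1 - 0)"
    by (intro tendsto_divide tendsto_exp_limit_sequentially tendsto_diff tendsto_const
        tendsto_divide_0[OF tendsto_const] filterlim_at_top_imp_at_infinity[OF filterlim_real_sequentially]) simp
  moreover have "eventually (\<lambda>n. (1 + (- t) / real n) ^ n / (1 - t / real n) = (1 - t / real n) ^ (n - 1)) sequentially"
  proof -
    obtain N :: nat where "real N > \<bar>t\<bar>" using reals_Archimedean2 by blast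
    have "(1 + (- t) / real n) ^ n / (1 - t / real n) = (1 - t / real n) ^ (n - 1)" if "n \<ge> N + 1" for n
    proof -
      have "1 - t / real n \<noteq> 0" using that \<open>real N > \<bar>t\<bar>\<close> by (auto simp: field_simps)
      moreover have "n = Suc (n - 1)" using that by simp
      then have "(1 - t / real n) ^ n = (1 - t / real n) * (1 - t / real n) ^ (n - 1)" by (metis power_Suc)
      ultimately show ?thesis by (simp add: field_simps)
    qed
    then show ?thesis unfolding eventually_sequentially by blast
  qed
  ultimately have "(\<lambda>n. (1 - t / real n) ^ (n - 1)) \<longlonglongrightarrow> exp (- t) / (1 - 0)"
    by (rule Lim_transform_eventually)
  then show ?thesis by simp
qed

lemma cdf_scaled_nn_ball_mass:
  fixes \<mu> :: "'d::euclidean_space measure"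
  assumes "prob_space \<mu>" and sets: "sets \<mu> = sets borel" and null: "\<And>r. measure \<mu> (sphere x r) = 0"
    and J: "finite J" "J \<noteq> {}" and t: "0 < c" "t \<le> c"
  shows "cdf (distr (PiM J (\<lambda>_. \<mu>)) borel (\<lambda>y. c * nn_ball_mass \<mu> J x y)) t
           = (if t < 0 then 0 else 1 - (1 - t / c) ^ card J)"
proof -
  let ?P = "PiM J (\<lambda>_. \<mu>)" and ?\<Phi> = "\<lambda>y. c * nn_ball_mass \<mu> J x y"
  interpret \<mu>: prob_space \<mu> by fact
  interpret P: prob_space ?P by (simp add: prob_space_PiM \<mu>.prob_space_axioms)
  have meas: "?\<Phi> \<in> borel_measurable ?P"
    by (intro borel_measurable_times borel_measurable_const borel_measurable_nn_ball_mass_PiM sets J(1)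
        \<mu>.finite_measure_axioms)
  have "?\<Phi> -` {t<..} \<inter> space ?P \<in> sets ?P" using meas by (rule measurable_sets) simp
  then have "{y \<in> space ?P. t < ?\<Phi> y} \<in> sets ?P" by (simp add: vimage_def Int_def conj_commute)
  moreover have "{y \<in> space ?P. ?\<Phi> y \<le> t} = space ?P - {y \<in> space ?P. t < ?\<Phi> y}" by auto
  ultimately have cdf_eq: "cdf (distr ?P borel ?\<Phi>) t = 1 - measure ?P {y \<in> space ?P. t < ?\<Phi> y}"
    by (simp add: cdf_def measure_distr[OF meas] P.prob_compl vimage_def Int_def conj_commute)
  show ?thesis
  proof (cases "t < 0")
    case True
    have "t < ?\<Phi> y" for y
      using \<open>0 < c\<close> by (intro less_le_trans[OF True]) (simp add: nn_ball_mass_def)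
    then show ?thesis using True by (simp add: cdf_eq P.prob_space)
  next
    case False
    then have "{y \<in> space ?P. t < ?\<Phi> y} = {y \<in> space ?P. t / c < nn_ball_mass \<mu> J x y}"
      using \<open>0 < c\<close> by (auto simp: field_simps)
    then show ?thesis
      using prob_nn_ball_mass_greater[OF assms(1) sets null J, of "t / c"] t False by (simp add: cdf_eq)
  qed
qed

lemma weak_conv_nn_ball_mass:
  fixes \<mu> :: "'d::euclidean_space measure"
  assumes "prob_space \<mu>" and sets: "sets \<mu> = sets borel" and null: "\<And>r. measure \<mu> (sphere x r) = 0"
    and J: "\<And>n. finite (J n)" "eventually (\<lambda>n. card (J n) = n - 1) sequentially"
  shows "weak_conv_m (\<lambda>n. distr (PiM (J n) (\<lambda>_. \<mu>)) borel (\<lambda>y. real n * nn_ball_mass \<mu> (J n) x y))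
           std_exponential"
  unfolding weak_conv_m_def weak_conv_def
proof (intro allI impI)
  fix t :: real
  let ?F = "\<lambda>n. if t < 0 then 0 else 1 - (1 - t / real n) ^ (n - 1)"
  obtain N :: nat where "real N > t" using reals_Archimedean2 by blast
  have "eventually (\<lambda>n. ?F n = cdf (distr (PiM (J n) (\<lambda>_. \<mu>)) borel (\<lambda>y. real n * nn_ball_mass \<mu> (J n) x y)) t)
      sequentially"
    using J(2) eventually_ge_at_top[of "N + 2"]
  proof eventually_elim
    case (elim n)
    then have "J n \<noteq> {}" "real n > 0" "t \<le> real n" using \<open>real N > t\<close> by auto
    from cdf_scaled_nn_ball_mass[OF assms(1) sets null J(1) this] show ?case by (simp add: elim(1))
  qed
  moreover have "?F \<longlonglongrightarrow> cdf std_exponential t"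
  proof (cases "t < 0")
    case False
    have "(\<lambda>n. 1 - (1 - t / real n) ^ (n - 1)) \<longlonglongrightarrow> 1 - exp (- t)"
      by (intro tendsto_diff tendsto_const tendsto_one_minus_div_power_pred)
    with False show ?thesis by (simp add: cdf_std_exponential)
  qed (simp add: cdf_std_exponential)
  ultimately show "(\<lambda>n. cdf (distr (PiM (J n) (\<lambda>_. \<mu>)) borel (\<lambda>y. real n * nn_ball_mass \<mu> (J n) x y)) t)
      \<longlonglongrightarrow> cdf std_exponential t"
    by (rule Lim_transform_eventually[rotated])
qed

lemma integral_nn_ball_mass_tendsto:
  fixes \<mu> :: "'d::euclidean_space measure" and f :: "real \<Rightarrow> real"
  assumes "prob_space \<mu>" and sets: "sets \<mu> = sets borel" and "\<And>r. measure \<mu> (sphere x r) = 0"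
    and J: "\<And>n. finite (J n)" "eventually (\<lambda>n. card (J n) = n - 1) sequentially"
    and f: "\<And>z. isCont f z" "\<And>z. norm (f z) \<le> K"
  shows "(\<lambda>n. \<integral>y. f (real n * nn_ball_mass \<mu> (J n) x y) \<partial>PiM (J n) (\<lambda>_. \<mu>))
           \<longlonglongrightarrow> (\<integral>z. f z \<partial>std_exponential)"
proof -
  interpret \<mu>: prob_space \<mu> by fact
  have meas: "(\<lambda>y. real n * nn_ball_mass \<mu> (J n) x y) \<in> borel_measurable (PiM (J n) (\<lambda>_. \<mu>))" for n
    by (intro borel_measurable_times borel_measurable_const borel_measurable_nn_ball_mass_PiM sets J(1)
        \<mu>.finite_measure_axioms)
  have "real_distribution (distr (PiM (J n) (\<lambda>_. \<mu>)) borel (\<lambda>y. real n * nn_ball_mass \<mu> (J n) x y))" for n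
    using meas by (intro prob_space.real_distribution_distr) (simp_all add: prob_space_PiM \<mu>.prob_space_axioms)
  from weak_conv_imp_integral_bdd_continuous_conv[OF this real_distribution_std_exponential
      weak_conv_nn_ball_mass[OF assms(1-5)] f]
  show ?thesis
    using f(1) by (simp add: integral_distr[OF meas] borel_measurable_continuous_onI continuous_at_imp_continuous_on)
qed

lemma integral_integral_nn_ball_mass_tendsto:
  fixes \<mu> :: "'d::euclidean_space measure" and f :: "real \<times> 'd \<Rightarrow> real"
  assumes "prob_space \<mu>" and sets: "sets \<mu> = sets borel" and null: "\<And>x r. measure \<mu> (sphere x r) = 0"
    and J: "\<And>n. finite (J n)" "eventually (\<lambda>n. card (J n) = n - 1) sequentially"
    and f: "continuous_on UNIV f" "\<And>p. \<bar>f p\<bar> \<le> K"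
  shows "(\<lambda>n. \<integral>x. (\<integral>y. f (real n * nn_ball_mass \<mu> (J n) x y, x) \<partial>PiM (J n) (\<lambda>_. \<mu>)) \<partial>\<mu>)
           \<longlonglongrightarrow> (\<integral>p. f p \<partial>(std_exponential \<Otimes>\<^sub>M \<mu>))"
proof -
  interpret \<mu>: prob_space \<mu> by fact
  interpret Exp: real_distribution std_exponential by (rule real_distribution_std_exponential)
  have [measurable_cong]: "sets \<mu> = sets borel" by (rule sets)
  have [measurable]: "f \<in> borel_measurable borel" using f(1) by (rule borel_measurable_continuous_onI)
  define s where "s n x = (\<integral>y. f (real n * nn_ball_mass \<mu> (J n) x y, x) \<partial>PiM (J n) (\<lambda>_. \<mu>))" for n x
  define lim where "lim x = (\<integral>z. f (z, x) \<partial>std_exponential)" for x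
  have "(\<lambda>n. \<integral>x. s n x \<partial>\<mu>) \<longlonglongrightarrow> (\<integral>x. lim x \<partial>\<mu>)"
  proof (rule integral_dominated_convergence[where w="\<lambda>_. K"])
    show "s n \<in> borel_measurable \<mu>" for n
      unfolding s_def using borel_measurable_nn_ball_mass[OF \<mu>.finite_measure_axioms sets J(1)]
      by (intro borel_measurable_integral_PiM[OF assms(1) sets]) (simp add: case_prod_beta')
    show "lim \<in> borel_measurable \<mu>"
      unfolding lim_def by (intro Exp.borel_measurable_lebesgue_integral) simp
    show "AE x in \<mu>. (\<lambda>n. s n x) \<longlonglongrightarrow> lim x"
    proof (rule AE_I2)
      fix x
      have "isCont (\<lambda>z. f (z, x)) z" for z
        using f(1) by (intro continuous_on_interior[of UNIV] continuous_on_compose2[OF f(1)])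
          (auto intro!: continuous_intros)
      then show "(\<lambda>n. s n x) \<longlonglongrightarrow> lim x"
        unfolding s_def lim_def using f(2) by (intro integral_nn_ball_mass_tendsto[OF assms(1) sets null J]) auto
    qed
    show "AE x in \<mu>. norm (s n x) \<le> K" for n
    proof (rule AE_I2)
      fix x
      interpret PiM: prob_space "PiM (J n) (\<lambda>_. \<mu>)" by (simp add: prob_space_PiM \<mu>.prob_space_axioms)
      show "norm (s n x) \<le> K" unfolding s_def using f(2) by (simp add: PiM.abs_integral_le_const)
    qed
  qed simp
  moreover have "(\<integral>x. lim x \<partial>\<mu>) = (\<integral>p. f p \<partial>(std_exponential \<Otimes>\<^sub>M \<mu>))"
  proof -
    interpret pair_prob_space std_exponential \<mu> ..
    have "integrable (std_exponential \<Otimes>\<^sub>M \<mu>) f"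
      using f(2) sets_pair_borel[OF sets_std_exponential sets]
      by (intro P.integrable_const_bound[where B=K]) (simp_all cong: measurable_cong_sets)
    then show ?thesis unfolding lim_def using integral_snd[of "\<lambda>z x. f (z, x)"] by simp
  qed
  ultimately show ?thesis by (simp add: s_def)
qed

section \<open>Convergence in distribution\<close>

lemma conv_in_dist_continuous_map:
  fixes \<phi> :: "'a::topological_space \<Rightarrow> 'b::topological_space"
  assumes conv: "conv_in_dist M Y L" and \<phi>: "continuous_on UNIV \<phi>" and sets: "sets L = sets borel"
  shows "conv_in_dist M (\<lambda>n \<omega>. \<phi> (Y n \<omega>)) (distr L borel \<phi>)"
  unfolding conv_in_dist_def
proof safe
  fix f :: "'b \<Rightarrow> real"
  assume f: "continuous_on UNIV f" "bounded (range f)"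
  have "continuous_on UNIV (\<lambda>x. f (\<phi> x))" using continuous_on_compose2[OF f(1) \<phi>] by simp
  moreover have "bounded (range (\<lambda>x. f (\<phi> x)))" using f(2) by (rule bounded_subset) auto
  ultimately have "(\<lambda>n. \<integral>\<omega>. f (\<phi> (Y n \<omega>)) \<partial>M) \<longlonglongrightarrow> (\<integral>x. f (\<phi> x) \<partial>L)"
    using conv unfolding conv_in_dist_def by blast
  moreover have "\<phi> \<in> borel_measurable L" "f \<in> borel_measurable borel"
    using \<phi> f(1) sets by (simp_all add: borel_measurable_continuous_onI cong: measurable_cong_sets)
  ultimately show "(\<lambda>n. \<integral>\<omega>. f (\<phi> (Y n \<omega>)) \<partial>M) \<longlonglongrightarrow> (\<integral>x. f x \<partial>distr L borel \<phi>)"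
    by (simp add: integral_distr)
qed

definition bounded_in_prob :: "'w measure \<Rightarrow> (nat \<Rightarrow> 'w \<Rightarrow> 'a::real_normed_vector) \<Rightarrow> bool" where
  "bounded_in_prob M Y \<longleftrightarrow>
     (\<forall>e>0. \<exists>A. eventually (\<lambda>n. measure M {\<omega> \<in> space M. A < norm (Y n \<omega>)} < e) sequentially)"

lemma conv_in_dist_imp_bounded_in_prob:
  fixes Y :: "nat \<Rightarrow> 'w \<Rightarrow> 'a::euclidean_space"
  assumes "prob_space M" "prob_space L" and sets: "sets L = sets borel"
    and meas: "\<And>n. Y n \<in> borel_measurable M" and conv: "conv_in_dist M Y L"
  shows "bounded_in_prob M Y"
  unfolding bounded_in_prob_def
proof safe
  fix e :: real
  assume "e > 0"
  interpret M: prob_space M by fact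
  interpret L: prob_space L by fact
  define S where "S k = {x. real k < norm (x :: 'a)}" for k :: nat
  have S_sets: "S k \<in> sets L" for k
    unfolding S_def sets by (intro borel_open open_Collect_less continuous_intros)
  have "(\<lambda>k. measure L (S k)) \<longlonglongrightarrow> measure L (\<Inter>k. S k)"
    using S_sets by (intro L.finite_Lim_measure_decseq) (auto simp: decseq_def S_def)
  moreover have "x \<notin> S (nat \<lceil>norm x\<rceil>)" for x
    by (simp add: S_def not_less real_nat_ceiling_ge)
  then have "(\<Inter>k. S k) = {}" by blast
  ultimately have "eventually (\<lambda>k. measure L (S k) < e) sequentially"
    using \<open>e > 0\<close> by (simp add: order_tendstoD(2))
  then obtain k where k: "measure L (S k) < e" by (auto simp: eventually_sequentially)
  define \<psi> where "\<psi> x = max 0 (min 1 (norm x - real k))" for x :: 'a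
  have \<psi>_cont: "continuous_on UNIV \<psi>" unfolding \<psi>_def by (intro continuous_intros)
  then have \<psi>_meas: "\<psi> \<in> borel_measurable borel" by (rule borel_measurable_continuous_onI)
  have "bounded (range \<psi>)" by (auto simp: bounded_iff \<psi>_def intro!: exI[of _ 1])
  with \<psi>_cont conv have "(\<lambda>n. \<integral>\<omega>. \<psi> (Y n \<omega>) \<partial>M) \<longlonglongrightarrow> (\<integral>x. \<psi> x \<partial>L)"
    unfolding conv_in_dist_def by blast
  moreover have "(\<integral>x. \<psi> x \<partial>L) \<le> measure L (S k)"
    using S_sets \<psi>_meas sets by (intro L.integral_le_measure)
      (auto simp: \<psi>_def S_def cong: measurable_cong_sets)
  ultimately have "eventually (\<lambda>n. (\<integral>\<omega>. \<psi> (Y n \<omega>) \<partial>M) < e) sequentially"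
    using k by (simp add: order_tendstoD(2))
  moreover have "measure M {\<omega> \<in> space M. real k + 1 < norm (Y n \<omega>)} \<le> (\<integral>\<omega>. \<psi> (Y n \<omega>) \<partial>M)" for n
    using meas[of n] \<psi>_meas by (intro M.measure_le_integral) (auto simp: \<psi>_def)
  ultimately have "eventually (\<lambda>n. measure M {\<omega> \<in> space M. real k + 1 < norm (Y n \<omega>)} < e) sequentially"
    by (elim eventually_mono) (rule le_less_trans)
  then show "\<exists>A. eventually (\<lambda>n. measure M {\<omega> \<in> space M. A < norm (Y n \<omega>)} < e) sequentially" ..
qed

lemma eventually_abs_integral_diff_le:
  fixes Y W :: "nat \<Rightarrow> 'w \<Rightarrow> 'a::euclidean_space" and f :: "'a \<Rightarrow> real"
  assumes "prob_space M" and meas: "\<And>n. Y n \<in> borel_measurable M" "\<And>n. W n \<in> borel_measurable M"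
    and bounded: "bounded_in_prob M Y"
    and close: "\<And>d. d > 0 \<Longrightarrow> (\<lambda>n. measure M {\<omega> \<in> space M. d < dist (W n \<omega>) (Y n \<omega>)}) \<longlonglongrightarrow> 0"
    and f: "continuous_on UNIV f" and K: "\<And>x. \<bar>f x\<bar> \<le> K" and "e > 0"
  shows "eventually (\<lambda>n. \<bar>(\<integral>\<omega>. f (W n \<omega>) \<partial>M) - (\<integral>\<omega>. f (Y n \<omega>) \<partial>M)\<bar> \<le> e * (1 + 4 * K)) sequentially"
proof -
  interpret prob_space M by fact
  have "K \<ge> 0" using K[of 0] by simp
  have f_meas: "f \<in> borel_measurable borel" using f by (rule borel_measurable_continuous_onI)
  obtain A where A: "eventually (\<lambda>n. measure M {\<omega> \<in> space M. A < norm (Y n \<omega>)} < e) sequentially"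
    using bounded \<open>e > 0\<close> unfolding bounded_in_prob_def by blast
  have "uniformly_continuous_on (cball 0 (\<bar>A\<bar> + 1)) f"
    using f by (intro compact_uniformly_continuous) (auto intro: continuous_on_subset)
  then obtain \<delta> where "\<delta> > 0"
    and \<delta>: "\<And>p q. p \<in> cball 0 (\<bar>A\<bar> + 1) \<Longrightarrow> q \<in> cball 0 (\<bar>A\<bar> + 1) \<Longrightarrow> dist q p < \<delta> \<Longrightarrow> dist (f q) (f p) < e"
    unfolding uniformly_continuous_on_def using \<open>e > 0\<close> by metis
  define d where "d = min \<delta> 1 / 2"
  have "d > 0" "d < \<delta>" "d \<le> 1" using \<open>\<delta> > 0\<close> by (auto simp: d_def)
  have "eventually (\<lambda>n. measure M {\<omega> \<in> space M. d < dist (W n \<omega>) (Y n \<omega>)} < e) sequentially"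
    using close[OF \<open>d > 0\<close>] \<open>e > 0\<close> by (simp add: order_tendstoD(2))
  with A show ?thesis
  proof eventually_elim
    case (elim n)
    define G where "G = {\<omega> \<in> space M. norm (Y n \<omega>) \<le> A \<and> dist (W n \<omega>) (Y n \<omega>) \<le> d}"
    have G_sets: "G \<in> sets M" unfolding G_def using meas[of n] by measurable
    have "\<bar>f (W n \<omega>) - f (Y n \<omega>)\<bar> \<le> e" if "\<omega> \<in> G" for \<omega>
    proof -
      have "norm (W n \<omega>) \<le> norm (Y n \<omega>) + dist (W n \<omega>) (Y n \<omega>)"
        by (metis dist_norm norm_triangle_sub add.commute)
      then have "Y n \<omega> \<in> cball 0 (\<bar>A\<bar> + 1)" "W n \<omega> \<in> cball 0 (\<bar>A\<bar> + 1)"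
        using that \<open>d \<le> 1\<close> by (auto simp: G_def)
      moreover have "dist (W n \<omega>) (Y n \<omega>) < \<delta>" using that \<open>d < \<delta>\<close> by (auto simp: G_def)
      ultimately show ?thesis using \<delta> by (force simp: dist_real_def)
    qed
    then have diff: "\<bar>(\<integral>\<omega>. f (W n \<omega>) \<partial>M) - (\<integral>\<omega>. f (Y n \<omega>) \<partial>M)\<bar> \<le> e + 2 * K * measure M (space M - G)"
      using K G_sets meas[of n] f_meas \<open>e > 0\<close> by (intro abs_integral_diff_le) auto
    have "measure M (space M - G) \<le> 2 * e"
    proof -
      let ?large = "{\<omega> \<in> space M. A < norm (Y n \<omega>)}" and ?far = "{\<omega> \<in> space M. d < dist (W n \<omega>) (Y n \<omega>)}"
      have "?large \<in> sets M" "?far \<in> sets M" using meas[of n] by measurable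
      moreover have "space M - G \<subseteq> ?large \<union> ?far" by (auto simp: G_def)
      ultimately have "measure M (space M - G) \<le> measure M ?large + measure M ?far"
        by (meson finite_measure_mono measure_Un_le order_trans sets.Un)
      then show ?thesis using elim by linarith
    qed
    then have "2 * K * measure M (space M - G) \<le> 2 * K * (2 * e)"
      using \<open>K \<ge> 0\<close> by (intro mult_left_mono) auto
    moreover have "e * (1 + 4 * K) = e + 2 * K * (2 * e)" by (simp add: algebra_simps)
    ultimately show ?case using diff by linarith
  qed
qed

lemma conv_in_dist_asymptotically_equivalent:
  fixes Y W :: "nat \<Rightarrow> 'w \<Rightarrow> 'a::euclidean_space"
  assumes "prob_space M" and meas: "\<And>n. Y n \<in> borel_measurable M" "\<And>n. W n \<in> borel_measurable M"
    and bounded: "bounded_in_prob M Y"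
    and close: "\<And>d. d > 0 \<Longrightarrow> (\<lambda>n. measure M {\<omega> \<in> space M. d < dist (W n \<omega>) (Y n \<omega>)}) \<longlonglongrightarrow> 0"
    and conv: "conv_in_dist M Y L"
  shows "conv_in_dist M W L"
  unfolding conv_in_dist_def
proof safe
  fix f :: "'a \<Rightarrow> real"
  assume f: "continuous_on UNIV f" "bounded (range f)"
  obtain K where K: "\<And>x. \<bar>f x\<bar> \<le> K" using f(2) by (auto simp: bounded_iff)
  define C where "C = 1 + 4 * K"
  have "C > 0" using K[of 0] by (simp add: C_def)
  have "(\<lambda>n. (\<integral>\<omega>. f (W n \<omega>) \<partial>M) - (\<integral>\<omega>. f (Y n \<omega>) \<partial>M)) \<longlonglongrightarrow> 0"
  proof (rule tendstoI)
    fix r :: real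
    assume "r > 0"
    define e where "e = r / 2 / C"
    have "e > 0" "e * C < r" using \<open>r > 0\<close> \<open>C > 0\<close> by (simp_all add: e_def)
    have "eventually (\<lambda>n. \<bar>(\<integral>\<omega>. f (W n \<omega>) \<partial>M) - (\<integral>\<omega>. f (Y n \<omega>) \<partial>M)\<bar> \<le> e * C) sequentially"
      unfolding C_def using assms(1) meas bounded close f(1) K \<open>e > 0\<close> by (rule eventually_abs_integral_diff_le)
    then show "eventually (\<lambda>n. dist ((\<integral>\<omega>. f (W n \<omega>) \<partial>M) - (\<integral>\<omega>. f (Y n \<omega>) \<partial>M)) 0 < r) sequentially"
      by eventually_elim (use \<open>e * C < r\<close> in \<open>simp add: dist_real_def\<close>)
  qed
  moreover have "(\<lambda>n. \<integral>\<omega>. f (Y n \<omega>) \<partial>M) \<longlonglongrightarrow> (\<integral>x. f x \<partial>L)"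
    using conv f unfolding conv_in_dist_def by blast
  ultimately have "(\<lambda>n. ((\<integral>\<omega>. f (W n \<omega>) \<partial>M) - (\<integral>\<omega>. f (Y n \<omega>) \<partial>M)) + (\<integral>\<omega>. f (Y n \<omega>) \<partial>M))
      \<longlonglongrightarrow> 0 + (\<integral>x. f x \<partial>L)"
    by (rule tendsto_add)
  then show "(\<lambda>n. \<integral>\<omega>. f (W n \<omega>) \<partial>M) \<longlonglongrightarrow> (\<integral>x. f x \<partial>L)" by simp
qed

locale iid_density_sample = prob_space M
  for M :: "'w measure" and \<xi> :: "nat \<Rightarrow> 'w \<Rightarrow> 'd::euclidean_space" and g :: "'d \<Rightarrow> real" +
  assumes density_measurable: "g \<in> borel_measurable lborel" and density_nonneg: "\<And>x. g x \<ge> 0"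
    and distributed: "\<And>j. distributed M lborel (\<xi> j) (\<lambda>x. ennreal (g x))"
    and indep: "indep_vars (\<lambda>_. borel) \<xi> UNIV"
begin

definition law :: "'d measure" where
  "law = density lborel (\<lambda>x. ennreal (g x))"

lemma sets_law [measurable_cong]: "sets law = sets borel"
  by (simp add: law_def)

lemma borel_measurable_sample [measurable]: "\<xi> j \<in> borel_measurable M"
  using distributed[of j] by (simp add: distributed_def measurable_lborel2)

lemma distr_sample_eq_law: "distr M borel (\<xi> j) = law"
proof -
  have "distr M borel (\<xi> j) = distr M lborel (\<xi> j)" by (rule distr_cong) auto
  then show ?thesis using distributed[of j] by (simp add: distributed_def law_def)
qed

lemma prob_space_law: "prob_space law"
  using prob_space_distr[OF borel_measurable_sample[of 0]] by (simp add: distr_sample_eq_law)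

lemma measure_law_sphere: "measure law (sphere x r) = 0"
proof -
  have "sphere x r \<in> null_sets lborel"
    using negligible_sphere[of x r] by (auto simp: negligible_iff_null_sets null_sets_completion_iff)
  then have "emeasure law (sphere x r) = 0"
    using density_measurable by (simp add: law_def emeasure_density nn_integral_null_set)
  then show ?thesis by (simp add: measure_def)
qed

lemma set_integral_density:
  assumes "A \<in> sets borel"
  shows "(LINT y : A | lborel. g y) = measure law A"
proof -
  interpret law: prob_space law by (rule prob_space_law)
  have "measure law A = (\<integral>x. indicator A x \<partial>law)" using assms by simp
  also have "\<dots> = (\<integral>x. g x *\<^sub>R indicator A x \<partial>lborel)"
    unfolding law_def using density_measurable density_nonneg assms by (intro integral_density) auto
  finally show ?thesis by (simp add: set_lebesgue_integral_def mult.commute)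
qed

lemma z_stat_eq_nn_ball_mass:
  "z_stat g \<xi> i n \<omega> = real n * nn_ball_mass law ({1..n} - {i}) (\<xi> i \<omega>) (\<lambda>j. \<xi> j \<omega>)"
  by (simp add: z_stat_def nn_radius_def nn_ball_mass_def set_integral_density)

lemma distr_restrict_eq_PiM:
  assumes "J \<noteq> {}"
  shows "distr M (PiM J (\<lambda>_. borel)) (\<lambda>\<omega>. restrict (\<lambda>j. \<xi> j \<omega>) J) = PiM J (\<lambda>_. law)"
proof -
  have "indep_vars (\<lambda>_. borel) \<xi> J" by (rule indep_vars_subset[OF indep]) simp
  then have "distr M (PiM J (\<lambda>_. borel)) (\<lambda>\<omega>. restrict (\<lambda>j. \<xi> j \<omega>) J) = PiM J (\<lambda>j. distr M borel (\<xi> j))"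
    using indep_vars_iff_distr_eq_PiM'[OF assms, where M'="\<lambda>_. borel" and X=\<xi>] by simp
  then show ?thesis by (simp add: distr_sample_eq_law)
qed

lemma integral_component_restrict:
  fixes F :: "'d \<Rightarrow> (nat \<Rightarrow> 'd) \<Rightarrow> real"
  assumes "i \<notin> J" "J \<noteq> {}"
    and F: "case_prod F \<in> borel_measurable (borel \<Otimes>\<^sub>M PiM J (\<lambda>_. borel))" "\<And>x y. \<bar>F x y\<bar> \<le> K"
  shows "(\<integral>\<omega>. F (\<xi> i \<omega>) (restrict (\<lambda>j. \<xi> j \<omega>) J) \<partial>M) = (\<integral>x. (\<integral>y. F x y \<partial>PiM J (\<lambda>_. law)) \<partial>law)"
proof -
  interpret law: prob_space law by (rule prob_space_law)
  interpret PiJ: prob_space "PiM J (\<lambda>_. law)" by (simp add: prob_space_PiM law.prob_space_axioms)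
  interpret product_sigma_finite "\<lambda>_. law"
    by (simp add: product_sigma_finite_def law.sigma_finite_measure_axioms)
  (* indep_var needs both variables in the same space, so xi i enters as restrict xi {i}. *)
  have indep_restrict: "indep_var (PiM {i} (\<lambda>_. borel)) (\<lambda>\<omega>. restrict (\<lambda>j. \<xi> j \<omega>) {i})
      (PiM J (\<lambda>_. borel)) (\<lambda>\<omega>. restrict (\<lambda>j. \<xi> j \<omega>) J)"
    using assms(1) by (intro indep_var_restrict[OF indep]) auto
  have G_meas: "(\<lambda>p. F (fst p i) (snd p)) \<in> borel_measurable (PiM {i} (\<lambda>_. borel) \<Otimes>\<^sub>M PiM J (\<lambda>_. borel))"
    using measurable_compose[OF _ F(1), of "\<lambda>p. (fst p i, snd p)"] by simp
  have inner_meas: "(\<lambda>x. \<integral>y. F x y \<partial>PiM J (\<lambda>_. law)) \<in> borel_measurable law"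
    using F(1) by (rule borel_measurable_integral_PiM[OF prob_space_law sets_law])
  have "(\<integral>\<omega>. F (\<xi> i \<omega>) (restrict (\<lambda>j. \<xi> j \<omega>) J) \<partial>M)
      = (\<integral>u. (\<integral>y. F (u i) y \<partial>PiM J (\<lambda>_. law)) \<partial>PiM {i} (\<lambda>_. law))"
    using integral_indep_var[OF indep_restrict G_meas F(2)] assms(2)
    by (simp add: distr_restrict_eq_PiM)
  also have "\<dots> = (\<integral>x. (\<integral>y. F x y \<partial>PiM J (\<lambda>_. law)) \<partial>distr (PiM {i} (\<lambda>_. law)) law (\<lambda>u. u i))"
    using inner_meas by (simp add: integral_distr)
  also have "distr (PiM {i} (\<lambda>_. law)) law (\<lambda>u. u i) = law" by (rule distr_singleton)
  finally show ?thesis .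
qed

lemma borel_measurable_z_stat: "z_stat g \<xi> i n \<in> borel_measurable M"
proof -
  have "(\<lambda>\<omega>. (\<xi> i \<omega>, restrict (\<lambda>j. \<xi> j \<omega>) ({1..n} - {i})))
      \<in> measurable M (borel \<Otimes>\<^sub>M PiM ({1..n} - {i}) (\<lambda>_. borel))"
    by measurable
  from measurable_compose[OF this borel_measurable_nn_ball_mass[OF _ sets_law]]
  show ?thesis
    using prob_space_law by (simp add: z_stat_eq_nn_ball_mass[abs_def] prob_space.finite_measure)
qed

lemma conv_in_dist_z_stat:
  assumes "i \<ge> 1"
  shows "conv_in_dist M (\<lambda>n \<omega>. (z_stat g \<xi> i n \<omega>, \<xi> i \<omega>)) (std_exponential \<Otimes>\<^sub>M law)"
  unfolding conv_in_dist_def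
proof safe
  fix f :: "real \<times> 'd \<Rightarrow> real"
  assume f: "continuous_on UNIV f" "bounded (range f)"
  obtain K where K: "\<And>p. \<bar>f p\<bar> \<le> K" using f(2) by (auto simp: bounded_iff)
  have [measurable]: "f \<in> borel_measurable borel" using f(1) by (rule borel_measurable_continuous_onI)
  interpret law: prob_space law by (rule prob_space_law)
  define J where "J n = {1..n} - {i}" for n
  have J_card: "eventually (\<lambda>n. card (J n) = n - 1) sequentially"
    using eventually_ge_at_top[of i] by eventually_elim (use assms in \<open>simp add: J_def\<close>)
  have "eventually (\<lambda>n. (\<integral>\<omega>. f (z_stat g \<xi> i n \<omega>, \<xi> i \<omega>) \<partial>M)
      = (\<integral>x. (\<integral>y. f (real n * nn_ball_mass law (J n) x y, x) \<partial>PiM (J n) (\<lambda>_. law)) \<partial>law)) sequentially"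
    using eventually_ge_at_top[of 2]
  proof eventually_elim
    case (elim n)
    then have "(if i = 1 then 2 else 1) \<in> J n" using assms by (simp add: J_def)
    then have "J n \<noteq> {}" by blast
    have "(\<integral>\<omega>. f (z_stat g \<xi> i n \<omega>, \<xi> i \<omega>) \<partial>M)
        = (\<integral>\<omega>. f (real n * nn_ball_mass law (J n) (\<xi> i \<omega>) (restrict (\<lambda>j. \<xi> j \<omega>) (J n)), \<xi> i \<omega>) \<partial>M)"
      by (simp add: z_stat_eq_nn_ball_mass J_def)
    also have "\<dots> = (\<integral>x. (\<integral>y. f (real n * nn_ball_mass law (J n) x y, x) \<partial>PiM (J n) (\<lambda>_. law)) \<partial>law)"
      using borel_measurable_nn_ball_mass[OF law.finite_measure_axioms sets_law, of "J n"] \<open>J n \<noteq> {}\<close> K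
      by (intro integral_component_restrict[where K=K]) (auto simp: J_def case_prod_beta')
    finally show ?case .
  qed
  moreover have "(\<lambda>n. \<integral>x. (\<integral>y. f (real n * nn_ball_mass law (J n) x y, x) \<partial>PiM (J n) (\<lambda>_. law)) \<partial>law)
      \<longlonglongrightarrow> (\<integral>p. f p \<partial>(std_exponential \<Otimes>\<^sub>M law))"
    using J_card by (intro integral_integral_nn_ball_mass_tendsto[OF prob_space_law sets_law measure_law_sphere _ _ f(1) K])
      (simp_all add: J_def)
  ultimately show "(\<lambda>n. \<integral>\<omega>. f (z_stat g \<xi> i n \<omega>, \<xi> i \<omega>) \<partial>M) \<longlonglongrightarrow> (\<integral>p. f p \<partial>(std_exponential \<Otimes>\<^sub>M law))"
    by (simp add: tendsto_cong)
qed

lemma conv_in_dist_z_stat_map: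
  fixes h :: "'d \<Rightarrow> 'b::second_countable_topology"
  assumes "i \<ge> 1" and h: "continuous_on UNIV h"
  shows "conv_in_dist M (\<lambda>n \<omega>. (z_stat g \<xi> i n \<omega>, h (\<xi> i \<omega>)))
           (std_exponential \<Otimes>\<^sub>M distr M borel (\<lambda>\<omega>. h (\<xi> i \<omega>)))"
proof -
  interpret law: prob_space law by (rule prob_space_law)
  have h_meas: "h \<in> borel_measurable borel" using h by (rule borel_measurable_continuous_onI)
  have cont: "continuous_on UNIV (\<lambda>p. (fst p, h (snd p)))"
    by (intro continuous_intros continuous_on_compose2[OF h]) auto
  have sets: "sets (std_exponential \<Otimes>\<^sub>M law) = sets borel"
    by (intro sets_pair_borel sets_std_exponential sets_law)
  have "conv_in_dist M (\<lambda>n \<omega>. (z_stat g \<xi> i n \<omega>, h (\<xi> i \<omega>)))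
      (distr (std_exponential \<Otimes>\<^sub>M law) borel (\<lambda>p. (fst p, h (snd p))))"
    using conv_in_dist_continuous_map[OF conv_in_dist_z_stat[OF assms(1)] cont sets] by simp
  moreover have "distr (std_exponential \<Otimes>\<^sub>M law) borel (\<lambda>p. (fst p, h (snd p)))
      = std_exponential \<Otimes>\<^sub>M distr M borel (\<lambda>\<omega>. h (\<xi> i \<omega>))"
  proof -
    have "distr M borel (\<lambda>\<omega>. h (\<xi> i \<omega>)) = distr law borel h"
      using distr_distr[OF h_meas borel_measurable_sample[of i]] by (simp add: comp_def distr_sample_eq_law)
    moreover have "std_exponential = distr std_exponential borel (\<lambda>z. z)"
      using distr_id2[OF sets_std_exponential[symmetric]] by simp
    moreover have "distr std_exponential borel (\<lambda>z. z) \<Otimes>\<^sub>M distr law borel h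
        = distr (std_exponential \<Otimes>\<^sub>M law) (borel \<Otimes>\<^sub>M borel) (\<lambda>(z, x). (z, h x))"
      using h_meas by (intro pair_measure_distr prob_space_imp_sigma_finite law.prob_space_distr) auto
    ultimately show ?thesis by (simp add: borel_prod case_prod_beta')
  qed
  ultimately show ?thesis by simp
qed

end

theorem proposition5:
  fixes M :: "'w measure"
    and \<xi> :: "nat \<Rightarrow> 'w \<Rightarrow> 'd::euclidean_space"
    and g :: "'d \<Rightarrow> real"
    and i :: nat
    and Xn :: "nat \<Rightarrow> 'w \<Rightarrow> 'b::euclidean_space"
    and h :: "'d \<Rightarrow> 'b"
  assumes "prob_space M"
    and "g \<in> borel_measurable lborel" and "\<And>x. g x \<ge> 0"
    and "\<And>j. distributed M lborel (\<xi> j) (\<lambda>x. ennreal (g x))"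
    and "prob_space.indep_vars M (\<lambda>_. borel) \<xi> UNIV"
    and "i \<ge> 1"
    and "\<And>n. Xn n \<in> borel_measurable M"
    and "continuous_on UNIV h"
    and "conv_in_prob M Xn (\<lambda>\<omega>. h (\<xi> i \<omega>))"
  shows "conv_in_dist M (\<lambda>n \<omega>. (z_stat g \<xi> i n \<omega>, Xn n \<omega>))
           (density lborel (\<lambda>x. ennreal (exponential_density 1 x))
              \<Otimes>\<^sub>M distr M borel (\<lambda>\<omega>. h (\<xi> i \<omega>)))"
proof -
  interpret iid_density_sample M \<xi> g
    using assms(1-5) by (simp add: iid_density_sample_def iid_density_sample_axioms_def)
  interpret Exp: real_distribution std_exponential by (rule real_distribution_std_exponential)
  have h_meas: "(\<lambda>\<omega>. h (\<xi> i \<omega>)) \<in> borel_measurable M"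
    using borel_measurable_continuous_onI[OF assms(8)] by measurable
  let ?L = "std_exponential \<Otimes>\<^sub>M distr M borel (\<lambda>\<omega>. h (\<xi> i \<omega>))"
  have conv: "conv_in_dist M (\<lambda>n \<omega>. (z_stat g \<xi> i n \<omega>, h (\<xi> i \<omega>))) ?L"
    using assms(6,8) by (rule conv_in_dist_z_stat_map)
  have meas_Y: "(\<lambda>\<omega>. (z_stat g \<xi> i n \<omega>, h (\<xi> i \<omega>))) \<in> borel_measurable M" for n
    by (intro borel_measurable_Pair borel_measurable_z_stat h_meas)
  have meas_W: "(\<lambda>\<omega>. (z_stat g \<xi> i n \<omega>, Xn n \<omega>)) \<in> borel_measurable M" for n
    by (intro borel_measurable_Pair borel_measurable_z_stat assms(7))
  have "prob_space ?L" using h_meas by (intro prob_space_pair Exp.prob_space_axioms prob_space_distr)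
  moreover have "sets ?L = sets borel" by (intro sets_pair_borel sets_std_exponential) simp
  ultimately have "bounded_in_prob M (\<lambda>n \<omega>. (z_stat g \<xi> i n \<omega>, h (\<xi> i \<omega>)))"
    by (rule conv_in_dist_imp_bounded_in_prob[OF prob_space_axioms _ _ meas_Y conv])
  moreover have "(\<lambda>n. measure M {\<omega> \<in> space M. d < dist (z_stat g \<xi> i n \<omega>, Xn n \<omega>) (z_stat g \<xi> i n \<omega>, h (\<xi> i \<omega>))}) \<longlonglongrightarrow> 0"
    if "d > 0" for d
    using assms(9) that by (simp add: conv_in_prob_def dist_Pair_Pair)
  ultimately have "conv_in_dist M (\<lambda>n \<omega>. (z_stat g \<xi> i n \<omega>, Xn n \<omega>)) ?L"
    by (rule conv_in_dist_asymptotically_equivalent[OF prob_space_axioms meas_Y meas_W _ _ conv])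
  then show ?thesis by (simp add: std_exponential_def)
qed

end
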